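(* Consider the masking noising process from $q_0$ on $[S]^d$, fix $T>0$, and let $(\overleftarrow x_t)_{t\in[0,T]}$ be its reverse process. Let $0\le\ell<t<T$, let $x_\ell$ satisfy $q_{T-\ell}(x_\ell)>0$, let $i\in m(x_\ell)$ and $c\in[S]$. Then $$\mathbb E_{x_t\sim\overleftarrow q_{t\mid\ell}(\cdot\mid x_\ell)}\Big[\big(s_{T-t}(x_\ell\odot_ic,x_\ell)-s_{T-t}(x_t\odot_ic,x_t)\big)\,\mathbb 1\{i\in m(x_t)\}\Big]=0.$$
   Context: Masking noising process on $([S]\cup\{\mathrm{MASK}\})^d$: CTMC with rate $Q(x,x\odot_i\mathrm{MASK})=1$ for each $i\notin m(x)$ and $0$ for other off-diagonal transitions, started from $q_0$ on $[S]^d$; $q_t$ its time-$t$ law; $s_t(y,x)=q_t(y)/q_t(x)$ (defined whenever $q_t(x)>0$). $m(x)=\{i:x^i=\mathrm{MASK}\}$; $x\odot_i c$ is $x$ with coordinate $i$ set to $c$. Reverse process on $[0,T]$: CTMC started from $q_T$ with rates $\overleftarrow Q_t(x,y)=Q(y,x)s_{T-t}(y,x)$, $x\ne y$, whose time-$t$ marginal is $q_{T-t}$; $\overleftarrow q_{t\mid\ell}(\cdot\mid x_\ell)$ is its conditional law at time $t$ given state $x_\ell$ at time $\ell$. *)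

theory Defs
  imports Complex_Main
begin

text \<open>States of the masking process: lists of length d over [S] \<union> {MASK},
  where [S] = {1..S} is encoded by Some c and MASK by None.\<close>

type_synonym mstate = "nat option list"

definition states :: "nat \<Rightarrow> nat \<Rightarrow> mstate set" where
  "states S d = {x. length x = d \<and> set x \<subseteq> insert None (Some ` {1..S})}"

definition clean_states :: "nat \<Rightarrow> nat \<Rightarrow> mstate set" where
  "clean_states S d = {x. length x = d \<and> set x \<subseteq> Some ` {1..S}}"

definition masked :: "mstate \<Rightarrow> nat set" where
  "masked x = {i. i < length x \<and> x ! i = None}"

definition mask_rate_off :: "mstate \<Rightarrow> mstate \<Rightarrow> real" where
  "mask_rate_off x y =
     (if x \<noteq> y \<and> (\<exists>i<length x. i \<notin> masked x \<and> y = x[i := None]) then 1 else 0)"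

definition mask_rate :: "nat \<Rightarrow> nat \<Rightarrow> mstate \<Rightarrow> mstate \<Rightarrow> real" where
  "mask_rate S d x y =
     (if x = y then - (\<Sum>z\<in>states S d - {x}. mask_rate_off x z) else mask_rate_off x y)"

fun mpow :: "'s set \<Rightarrow> ('s \<Rightarrow> 's \<Rightarrow> real) \<Rightarrow> nat \<Rightarrow> 's \<Rightarrow> 's \<Rightarrow> real" where
  "mpow X Q 0 x y = (if x = y then 1 else 0)"
| "mpow X Q (Suc n) x y = (\<Sum>z\<in>X. mpow X Q n x z * Q z y)"

definition ctmc_trans :: "'s set \<Rightarrow> ('s \<Rightarrow> 's \<Rightarrow> real) \<Rightarrow> real \<Rightarrow> 's \<Rightarrow> 's \<Rightarrow> real" where
  "ctmc_trans X Q t x y = (\<Sum>n. t ^ n / fact n * mpow X Q n x y)"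

definition fwd_law :: "nat \<Rightarrow> nat \<Rightarrow> (mstate \<Rightarrow> real) \<Rightarrow> real \<Rightarrow> mstate \<Rightarrow> real" where
  "fwd_law S d q0 t y = (\<Sum>x\<in>states S d. q0 x * ctmc_trans (states S d) (mask_rate S d) t x y)"

definition score :: "nat \<Rightarrow> nat \<Rightarrow> (mstate \<Rightarrow> real) \<Rightarrow> real \<Rightarrow> mstate \<Rightarrow> mstate \<Rightarrow> real" where
  "score S d q0 t y x = fwd_law S d q0 t y / fwd_law S d q0 t x"

definition rev_rate_off :: "nat \<Rightarrow> nat \<Rightarrow> (mstate \<Rightarrow> real) \<Rightarrow> real \<Rightarrow> real \<Rightarrow> mstate \<Rightarrow> mstate \<Rightarrow> real" where
  "rev_rate_off S d q0 T tau x y = mask_rate S d y x * score S d q0 (T - tau) y x"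

definition rev_rate :: "nat \<Rightarrow> nat \<Rightarrow> (mstate \<Rightarrow> real) \<Rightarrow> real \<Rightarrow> real \<Rightarrow> mstate \<Rightarrow> mstate \<Rightarrow> real" where
  "rev_rate S d q0 T tau x y =
     (if x = y then - (\<Sum>z\<in>states S d - {x}. rev_rate_off S d q0 T tau x z)
      else rev_rate_off S d q0 T tau x y)"

text \<open>p is the conditional law of the reverse process on [l, t] given state xl at time l:
  the solution of the Kolmogorov forward equation of the (time-inhomogeneous) reverse CTMC
  with initial condition the point mass at xl.\<close>
definition rev_cond_law ::
  "nat \<Rightarrow> nat \<Rightarrow> (mstate \<Rightarrow> real) \<Rightarrow> real \<Rightarrow> real \<Rightarrow> mstate \<Rightarrow> real \<Rightarrow> (real \<Rightarrow> mstate \<Rightarrow> real) \<Rightarrow> bool"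
where
  "rev_cond_law S d q0 T l xl t p \<longleftrightarrow>
     (\<forall>y\<in>states S d. p l y = (if y = xl then 1 else 0)) \<and>
     (\<forall>tau\<in>{l..t}. \<forall>y\<in>states S d.
        ((\<lambda>r. p r y) has_real_derivative
           (\<Sum>x\<in>states S d. p tau x * rev_rate S d q0 T tau x y)) (at tau within {l..t}))"

end

theory Submission
  imports Defs "HOL-Analysis.Derivative"
begin

text \<open>
  Let \<open>\<phi>\<close> solve the backward Kolmogorov equation of the reverse process on \<open>[l, t]\<close> with the
  integrand of the theorem as terminal value. Pairing it with the forward equation of the
  conditional law \<open>p\<close> shows that \<open>\<Sum>\<^sub>x p r x * \<phi> r x\<close> does not depend on \<open>r\<close>, so the
  expectation equals \<open>\<phi> l xl = 0\<close>.

  Such a \<open>\<phi>\<close> is explicit. The forward law is q_u(y) = e^(-(d-k)u) (1 - e^(-u))^k mu(y), where k is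
  the number of masks of y and mu(y) is the q_0-mass of the clean states of which y is a masking.
  Hence s_u(x[j := a], x) = e^(-u) / (1 - e^(-u)) * mu(x[j := a]) / mu(x), and with
  pi(x) = mu(x[i := c]) / mu(x) one may take phi_r(x) = g(r) (pi(xl) - pi(x)) if i is masked in x
  and 0 otherwise, where g(r) = e^(t-T) / (1 - e^(r-T)). Unmasking a coordinate j other than i
  contributes nothing because mu is a marginal of q_0, i.e. the sum over a of mu(x[j := a]) is
  mu(x); unmasking i kills phi at rate e^(r-T) / (1 - e^(r-T)), the logarithmic derivative of g.
\<close>

section \<open>Pairing the forward and backward Kolmogorov equations\<close>

lemma forward_backward_pairing_const:
  fixes p \<phi> :: "real \<Rightarrow> 's \<Rightarrow> real" and R :: "real \<Rightarrow> 's \<Rightarrow> 's \<Rightarrow> real"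
  assumes "finite X" "l \<le> t"
    and forward: "\<And>\<tau> y. \<tau> \<in> {l..t} \<Longrightarrow> y \<in> X \<Longrightarrow>
      ((\<lambda>r. p r y) has_real_derivative (\<Sum>x\<in>X. p \<tau> x * R \<tau> x y)) (at \<tau> within {l..t})"
    and backward: "\<And>\<tau> x. \<tau> \<in> {l..t} \<Longrightarrow> x \<in> X \<Longrightarrow>
      ((\<lambda>r. \<phi> r x) has_real_derivative - (\<Sum>y\<in>X. R \<tau> x y * \<phi> \<tau> y)) (at \<tau> within {l..t})"
  shows "(\<Sum>x\<in>X. p t x * \<phi> t x) = (\<Sum>x\<in>X. p l x * \<phi> l x)"
proof -
  define F where "F = (\<lambda>r. \<Sum>x\<in>X. p r x * \<phi> r x)"
  have "(F has_real_derivative 0) (at \<tau> within {l..t})" if \<tau>: "\<tau> \<in> {l..t}" for \<tau>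
  proof -
    have "(\<Sum>x\<in>X. (\<Sum>z\<in>X. p \<tau> z * R \<tau> z x) * \<phi> \<tau> x)
        = (\<Sum>x\<in>X. \<Sum>z\<in>X. p \<tau> z * R \<tau> z x * \<phi> \<tau> x)"
      by (simp add: sum_distrib_right)
    also have "\<dots> = (\<Sum>z\<in>X. \<Sum>x\<in>X. p \<tau> z * R \<tau> z x * \<phi> \<tau> x)"
      by (rule sum.swap)
    also have "\<dots> = (\<Sum>x\<in>X. (\<Sum>y\<in>X. R \<tau> x y * \<phi> \<tau> y) * p \<tau> x)"
      unfolding sum_distrib_right by (simp add: mult_ac)
    finally have "(\<Sum>x\<in>X. (\<Sum>z\<in>X. p \<tau> z * R \<tau> z x) * \<phi> \<tau> x
        + - (\<Sum>y\<in>X. R \<tau> x y * \<phi> \<tau> y) * p \<tau> x) = 0"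
      by (simp add: sum_subtractf)
    moreover have "(F has_real_derivative
        (\<Sum>x\<in>X. (\<Sum>z\<in>X. p \<tau> z * R \<tau> z x) * \<phi> \<tau> x + - (\<Sum>y\<in>X. R \<tau> x y * \<phi> \<tau> y) * p \<tau> x))
        (at \<tau> within {l..t})"
      unfolding F_def
      by (rule DERIV_sum, rule DERIV_mult) (erule forward[OF \<tau>], erule backward[OF \<tau>])
    ultimately show ?thesis
      by simp
  qed
  then obtain C where "\<forall>r\<in>{l..t}. F r = C"
    using has_field_derivative_zero_constant[of "{l..t}" F] by auto
  then show ?thesis
    using \<open>l \<le> t\<close> unfolding F_def by simp
qed

lemma finite_states: "finite (states S d)"
proof -
  have "states S d = {xs. set xs \<subseteq> insert None (Some ` {1..S}) \<and> length xs = d}"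
    unfolding states_def by auto
  then show ?thesis
    by (simp add: finite_lists_length_eq)
qed

lemma clean_states_subset: "clean_states S d \<subseteq> states S d"
  unfolding clean_states_def states_def by auto

lemma length_states: "x \<in> states S d \<Longrightarrow> length x = d"
  unfolding states_def by simp

lemma nth_states_Some:
  assumes "x \<in> states S d" "j < d" "x ! j \<noteq> None"
  obtains a where "a \<in> {1..S}" "x ! j = Some a"
proof -
  have "x ! j \<in> insert None (Some ` {1..S})"
    using assms nth_mem[of j x] unfolding states_def by blast
  then show ?thesis using that assms(3) by blast
qed

lemma nth_clean_states:
  assumes "x \<in> clean_states S d" "j < d"
  obtains a where "a \<in> {1..S}" "x ! j = Some a"
proof -
  have "x ! j \<in> Some ` {1..S}"
    using assms nth_mem[of j x] unfolding clean_states_def by blast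
  then show ?thesis using that by blast
qed

lemma update_Some_states:
  assumes "x \<in> states S d" "a \<in> {1..S}"
  shows "x[j := Some a] \<in> states S d"
  using assms set_update_subset_insert[of x j "Some a"] unfolding states_def by auto

lemma update_None_states:
  assumes "x \<in> states S d"
  shows "x[j := None] \<in> states S d"
  using assms set_update_subset_insert[of x j None] unfolding states_def by auto

lemma finite_masked: "finite (masked x)"
  unfolding masked_def by simp

lemma card_masked_le: "x \<in> states S d \<Longrightarrow> card (masked x) \<le> d"
  using card_mono[of "{..<d}" "masked x"] unfolding masked_def by (auto simp: length_states)

lemma masked_update_Some: "masked (x[j := Some a]) = masked x - {j}"
  unfolding masked_def by (cases "j < length x") (auto simp: nth_list_update)

lemma card_masked_update_Some: "j \<in> masked x \<Longrightarrow> card (masked (x[j := Some a])) = card (masked x) - 1"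
  by (simp add: masked_update_Some finite_masked)

lemma mask_rate_off_into:
  assumes y: "y \<in> states S d"
  shows "mask_rate_off y x = (if \<exists>j\<in>masked x. \<exists>a\<in>{1..S}. y = x[j := Some a] then 1 else 0)"
proof -
  have "(y \<noteq> x \<and> (\<exists>i<length y. i \<notin> masked y \<and> x = y[i := None]))
        \<longleftrightarrow> (\<exists>j\<in>masked x. \<exists>a\<in>{1..S}. y = x[j := Some a])"
  proof
    assume "y \<noteq> x \<and> (\<exists>i<length y. i \<notin> masked y \<and> x = y[i := None])"
    then obtain i where i: "i < length y" "y ! i \<noteq> None" and x: "x = y[i := None]"
      unfolding masked_def by auto
    have "i < d" using i y by (simp add: length_states)
    obtain a where a: "a \<in> {1..S}" "y ! i = Some a"
      by (rule nth_states_Some[OF y \<open>i < d\<close> i(2)])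
    have "i \<in> masked x" using i x unfolding masked_def by simp
    moreover have "y = x[i := Some a]"
      using x list_update_id[of y i] a(2) by simp
    ultimately show "\<exists>j\<in>masked x. \<exists>a\<in>{1..S}. y = x[j := Some a]" using a(1) by blast
  next
    assume "\<exists>j\<in>masked x. \<exists>a\<in>{1..S}. y = x[j := Some a]"
    then obtain j a where j: "j < length x" "x ! j = None" and y: "y = x[j := Some a]"
      unfolding masked_def by auto
    have "x = y[j := None]"
      using y list_update_id[of x j] j(2) by simp
    moreover have "j < length y" "j \<notin> masked y" using j y by (simp_all add: masked_def)
    moreover have "y ! j \<noteq> x ! j" using j y by simp
    ultimately show "y \<noteq> x \<and> (\<exists>i<length y. i \<notin> masked y \<and> x = y[i := None])"
      by metis
  qed
  then show ?thesis unfolding mask_rate_off_def by simp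
qed

lemma sum_mask_rate_off_into:
  assumes x: "x \<in> states S d"
  shows "(\<Sum>y\<in>states S d - {x}. mask_rate_off y x * h y)
       = (\<Sum>j\<in>masked x. \<Sum>a\<in>{1..S}. h (x[j := Some a]))"
proof -
  let ?unmask = "\<lambda>(j, a). x[j := Some a]"
  let ?P = "Sigma (masked x) (\<lambda>_. {1..S})"
  have inj: "inj_on ?unmask ?P"
  proof (rule inj_onI)
    fix u u' assume "u \<in> ?P" "u' \<in> ?P" "?unmask u = ?unmask u'"
    moreover obtain j a j' a' where "u = (j, a)" "u' = (j', a')" by fastforce
    ultimately have eq: "x[j := Some a] = x[j' := Some a']"
      and "j < length x" "j' < length x" "x ! j = None" "x ! j' = None"
      unfolding masked_def by auto
    with \<open>u = (j, a)\<close> \<open>u' = (j', a')\<close> show "u = u'"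
      by (metis nth_list_update_eq nth_list_update_neq option.distinct(1) option.inject)
  qed
  have image: "?unmask ` ?P \<subseteq> states S d - {x}"
    using x by (auto simp: update_Some_states masked_def) (metis nth_list_update_eq option.distinct(1))
  have "(\<Sum>y\<in>states S d - {x}. mask_rate_off y x * h y)
      = (\<Sum>y\<in>states S d - {x}. if y \<in> ?unmask ` ?P then h y else 0)"
  proof (rule sum.cong[OF refl])
    fix y assume "y \<in> states S d - {x}"
    then have "mask_rate_off y x = (if \<exists>j\<in>masked x. \<exists>a\<in>{1..S}. y = x[j := Some a] then 1 else 0)"
      using mask_rate_off_into[of y S d x] by blast
    moreover have "y \<in> ?unmask ` ?P \<longleftrightarrow> (\<exists>j\<in>masked x. \<exists>a\<in>{1..S}. y = x[j := Some a])"
      by force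
    ultimately show "mask_rate_off y x * h y = (if y \<in> ?unmask ` ?P then h y else 0)"
      by simp
  qed
  also have "\<dots> = (\<Sum>y\<in>?unmask ` ?P. h y)"
    using image by (simp add: sum.inter_restrict[symmetric] finite_states Int_absorb1)
  also have "\<dots> = (\<Sum>(j, a)\<in>?P. h (x[j := Some a]))"
    using sum.reindex[OF inj, of h] by (simp add: comp_def case_prod_unfold)
  also have "\<dots> = (\<Sum>j\<in>masked x. \<Sum>a\<in>{1..S}. h (x[j := Some a]))"
    by (simp add: sum.Sigma finite_masked)
  finally show ?thesis .
qed

lemma sum_mask_rate_off_from:
  assumes y: "y \<in> states S d"
  shows "(\<Sum>w\<in>states S d - {y}. mask_rate_off y w) = real (d - card (masked y))"
proof -
  let ?U = "{..<length y} - masked y"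
  let ?mask = "\<lambda>j. y[j := None]"
  have inj: "inj_on ?mask ?U"
  proof (rule inj_onI, rule ccontr)
    fix j j' assume "j \<in> ?U" "j' \<in> ?U" and eq: "y[j := None] = y[j' := None]" and "j \<noteq> j'"
    from \<open>j \<in> ?U\<close> have j: "j < length y" "y ! j \<noteq> None" by (auto simp: masked_def)
    have "y ! j = y[j' := None] ! j" using \<open>j \<noteq> j'\<close> by simp
    also have "\<dots> = None" using j by (simp flip: eq)
    finally show False using j by simp
  qed
  have image: "?mask ` ?U \<subseteq> states S d - {y}"
  proof (rule image_subsetI)
    fix j assume "j \<in> ?U"
    then have "j < length y" "y ! j \<noteq> None" by (auto simp: masked_def)
    then have "y[j := None] ! j \<noteq> y ! j" by auto
    then show "y[j := None] \<in> states S d - {y}" using update_None_states[OF y] by fastforce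
  qed
  have "(\<Sum>w\<in>states S d - {y}. mask_rate_off y w)
      = (\<Sum>w\<in>states S d - {y}. if w \<in> ?mask ` ?U then 1 else 0)"
  proof (rule sum.cong[OF refl])
    fix w assume "w \<in> states S d - {y}"
    moreover have "w \<in> ?mask ` ?U \<longleftrightarrow> (\<exists>i<length y. i \<notin> masked y \<and> w = y[i := None])"
      by blast
    ultimately show "mask_rate_off y w = (if w \<in> ?mask ` ?U then 1 else 0)"
      unfolding mask_rate_off_def by auto
  qed
  also have "\<dots> = (\<Sum>w\<in>(states S d - {y}) \<inter> ?mask ` ?U. 1)"
    by (rule sum.inter_restrict[symmetric]) (simp add: finite_states)
  also have "\<dots> = (\<Sum>w\<in>?mask ` ?U. 1)"
    using image by (simp only: Int_absorb1)
  also have "\<dots> = card ?U"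
    using card_image[OF inj] by simp
  also have "\<dots> = d - card (masked y)"
    using y by (simp add: card_Diff_subset finite_masked masked_def length_states subset_eq)
  finally show ?thesis .
qed

lemma mask_rate_diag: "y \<in> states S d \<Longrightarrow> mask_rate S d y y = - real (d - card (masked y))"
  unfolding mask_rate_def by (simp add: sum_mask_rate_off_from)

lemma sum_mask_rate_into:
  assumes y: "y \<in> states S d"
  shows "(\<Sum>z\<in>states S d. g z * mask_rate S d z y)
       = - real (d - card (masked y)) * g y + (\<Sum>j\<in>masked y. \<Sum>a\<in>{1..S}. g (y[j := Some a]))"
proof -
  have "(\<Sum>z\<in>states S d. g z * mask_rate S d z y)
      = g y * mask_rate S d y y + (\<Sum>z\<in>states S d - {y}. mask_rate_off z y * g z)"
    using y by (simp add: sum.remove finite_states mask_rate_def mult.commute)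
  then show ?thesis
    using y by (simp add: mask_rate_diag sum_mask_rate_off_into)
qed

section \<open>The forward law in closed form\<close>

definition masking_of :: "mstate \<Rightarrow> mstate \<Rightarrow> bool" where
  "masking_of y x \<longleftrightarrow> list_all2 (\<lambda>b a. b = None \<or> b = a) y x"

lemma masking_of_update_Some:
  assumes "j \<in> masked y"
  shows "masking_of (y[j := Some a]) x \<longleftrightarrow> masking_of y x \<and> x ! j = Some a"
  using assms unfolding masking_of_def list_all2_conv_all_nth masked_def
  by (auto simp: nth_list_update)

lemma masking_of_clean_iff:
  assumes "x \<in> clean_states S d"
  shows "masking_of y x \<and> masked y = {} \<longleftrightarrow> y = x"
proof
  assume "masking_of y x \<and> masked y = {}"
  then have "length y = length x" "\<forall>i<length x. y ! i = None \<or> y ! i = x ! i"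
    and "\<forall>i<length y. y ! i \<noteq> None"
    unfolding masking_of_def list_all2_conv_all_nth masked_def by auto
  then show "y = x"
    by (metis nth_equalityI)
next
  assume "y = x"
  moreover have "x ! j \<noteq> None" if "j < length x" for j
    using assms nth_mem[OF that] unfolding clean_states_def by auto
  ultimately show "masking_of y x \<and> masked y = {}"
    unfolding masking_of_def list_all2_conv_all_nth masked_def by auto
qed

lemma sum_masking_of_update_Some:
  assumes x: "x \<in> clean_states S d" and y: "y \<in> states S d" and j: "j \<in> masked y"
  shows "(\<Sum>a\<in>{1..S}. if masking_of (y[j := Some a]) x then v else 0)
       = (if masking_of y x then v else (0::real))"
proof -
  have "j < d" using j y by (simp add: masked_def length_states)
  then obtain a0 where a0: "a0 \<in> {1..S}" "x ! j = Some a0"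
    using nth_clean_states[OF x] by metis
  have "(\<Sum>a\<in>{1..S}. if masking_of (y[j := Some a]) x then v else 0)
      = (\<Sum>a\<in>{1..S}. if a = a0 then (if masking_of y x then v else 0) else 0)"
    by (rule sum.cong) (auto simp: masking_of_update_Some[OF j] a0)
  also have "\<dots> = (if masking_of y x then v else 0)"
    using a0 by simp
  finally show ?thesis .
qed

text \<open>The \<open>n\<close>-th derivative at \<open>u = 0\<close> of e^(-(d-k)u) (1 - e^(-u))^k, expanded binomially.\<close>

definition mask_coeff :: "nat \<Rightarrow> nat \<Rightarrow> nat \<Rightarrow> real" where
  "mask_coeff d n k = (\<Sum>j\<le>k. real (k choose j) * (-1) ^ j * (- (real d - real k + real j)) ^ n)"

lemma mask_coeff_0: "mask_coeff d 0 k = (if k = 0 then 1 else 0)"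
proof -
  have "mask_coeff d 0 k = (\<Sum>j\<le>k. real (k choose j) * (-1) ^ j * 1 ^ (k - j))"
    unfolding mask_coeff_def by simp
  also have "\<dots> = (-1 + 1) ^ k"
    by (rule binomial_ring[symmetric])
  finally show ?thesis by simp
qed

lemma mask_coeff_Suc:
  "mask_coeff d (Suc n) k = - (real d - real k) * mask_coeff d n k + real k * mask_coeff d n (k - 1)"
proof (cases k)
  case 0
  then show ?thesis
    unfolding mask_coeff_def by simp
next
  case (Suc k')
  let ?t = "\<lambda>k j. real (k choose j) * (-1) ^ j * (- (real d - real k + real j)) ^ n"
  have shift: "real (Suc j) * ?t k (Suc j) = - real k * ?t k' j" for j
  proof -
    have binom: "real (Suc j) * real (k choose Suc j) = real k * real (k' choose j)"
      using Suc_times_binomial[of j k'] unfolding Suc by (metis of_nat_mult)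
    have index: "real d - real k + real (Suc j) = real d - real k' + real j"
      using Suc by simp
    have "real (Suc j) * ?t k (Suc j)
        = (real (Suc j) * real (k choose Suc j)) * (-1) ^ Suc j * (- (real d - real k + real (Suc j))) ^ n"
      by (simp only: mult.assoc)
    also have "\<dots> = (real k * real (k' choose j)) * (-1) ^ Suc j * (- (real d - real k' + real j)) ^ n"
      by (simp only: binom index)
    finally show ?thesis
      by simp
  qed
  have "mask_coeff d (Suc n) k = - (real d - real k) * mask_coeff d n k - (\<Sum>j\<le>k. real j * ?t k j)"
    unfolding mask_coeff_def
    by (simp add: sum_distrib_left sum_subtractf[symmetric] algebra_simps)
  also have "(\<Sum>j\<le>k. real j * ?t k j) = (\<Sum>j\<le>k'. real (Suc j) * ?t k (Suc j))"
    unfolding Suc by (subst sum.atMost_Suc_shift) simp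
  also have "\<dots> = (\<Sum>j\<le>k'. - real k * ?t k' j)"
    by (simp only: shift)
  also have "\<dots> = - real k * mask_coeff d n (k - 1)"
    unfolding mask_coeff_def Suc diff_Suc_1 sum_distrib_left ..
  finally show ?thesis
    by simp
qed

lemma mpow_mask_rate:
  assumes x: "x \<in> clean_states S d"
  shows "y \<in> states S d \<Longrightarrow> mpow (states S d) (mask_rate S d) n x y
           = (if masking_of y x then mask_coeff d n (card (masked y)) else 0)"
proof (induction n arbitrary: y)
  case 0
  then show ?case
    using masking_of_clean_iff[OF x, of y] by (auto simp: mask_coeff_0 finite_masked)
next
  case (Suc n)
  let ?f = "\<lambda>z. if masking_of z x then mask_coeff d n (card (masked z)) else 0"
  let ?k = "card (masked y)"
  have unmask: "(\<Sum>a\<in>{1..S}. ?f (y[j := Some a])) = (if masking_of y x then mask_coeff d n (?k - 1) else 0)"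
    if j: "j \<in> masked y" for j
  proof -
    have "(\<Sum>a\<in>{1..S}. ?f (y[j := Some a]))
        = (\<Sum>a\<in>{1..S}. if masking_of (y[j := Some a]) x then mask_coeff d n (?k - 1) else 0)"
      by (rule sum.cong[OF refl]) (simp add: card_masked_update_Some[OF j])
    then show ?thesis
      using sum_masking_of_update_Some[OF x Suc.prems j] by simp
  qed
  have "mpow (states S d) (mask_rate S d) (Suc n) x y = (\<Sum>z\<in>states S d. ?f z * mask_rate S d z y)"
    by (simp add: Suc.IH)
  also have "\<dots> = - real (d - ?k) * ?f y + (\<Sum>j\<in>masked y. \<Sum>a\<in>{1..S}. ?f (y[j := Some a]))"
    by (rule sum_mask_rate_into[OF Suc.prems])
  also have "\<dots> = - real (d - ?k) * ?f y + (\<Sum>j\<in>masked y. if masking_of y x then mask_coeff d n (?k - 1) else 0)"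
    by (intro arg_cong2[where f = "(+)"] refl sum.cong) (erule unmask)
  finally show ?case
    using mask_coeff_Suc[of d n ?k] card_masked_le[OF Suc.prems] by (simp add: of_nat_diff)
qed

lemma mask_coeff_sums:
  assumes "k \<le> d"
  shows "(\<lambda>n. u ^ n / fact n * mask_coeff d n k) sums (exp (- u) ^ (d - k) * (1 - exp (- u)) ^ k)"
proof -
  define r where "r j = - (real d - real k + real j) * u" for j
  have "(\<lambda>n. r j ^ n / fact n) sums exp (r j)" for j
    using exp_converges[of "r j"] by (simp add: divide_inverse_commute scaleR_conv_of_real)
  then have "(\<lambda>n. \<Sum>j\<le>k. real (k choose j) * (-1) ^ j * (r j ^ n / fact n))
          sums (\<Sum>j\<le>k. real (k choose j) * (-1) ^ j * exp (r j))"
    by (intro sums_sum sums_mult)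
  moreover have "u ^ n / fact n * mask_coeff d n k
      = (\<Sum>j\<le>k. real (k choose j) * (-1) ^ j * (r j ^ n / fact n))" for n
    unfolding mask_coeff_def r_def sum_distrib_left
    by (rule sum.cong[OF refl]) (simp add: power_mult_distrib)
  moreover have "(\<Sum>j\<le>k. real (k choose j) * (-1) ^ j * exp (r j))
      = exp (- u) ^ (d - k) * (1 - exp (- u)) ^ k"
  proof -
    have "exp (r j) = exp (- u) ^ (d - k) * exp (- u) ^ j" for j
    proof -
      have "r j = real (d - k + j) * (- u)"
        unfolding r_def using assms by (simp add: of_nat_diff algebra_simps)
      then have "exp (r j) = exp (- u) ^ (d - k + j)"
        by (simp only: exp_of_nat_mult)
      then show ?thesis
        by (simp add: power_add)
    qed
    then have "(\<Sum>j\<le>k. real (k choose j) * (-1) ^ j * exp (r j))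
        = exp (- u) ^ (d - k) * (\<Sum>j\<le>k. real (k choose j) * (- exp (- u)) ^ j * 1 ^ (k - j))"
      by (simp add: sum_distrib_left power_minus' algebra_simps)
    also have "\<dots> = exp (- u) ^ (d - k) * (1 - exp (- u)) ^ k"
      using binomial_ring[of "- exp (- u)" 1 k] by simp
    finally show ?thesis .
  qed
  ultimately show ?thesis
    by simp
qed

lemma ctmc_trans_mask_rate:
  assumes "x \<in> clean_states S d" "y \<in> states S d"
  shows "ctmc_trans (states S d) (mask_rate S d) u x y
       = (if masking_of y x
          then exp (- u) ^ (d - card (masked y)) * (1 - exp (- u)) ^ card (masked y) else 0)"
  using mask_coeff_sums[OF card_masked_le[OF assms(2)], of u]
  unfolding ctmc_trans_def mpow_mask_rate[OF assms] by (auto dest: sums_unique)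

locale masking_process =
  fixes S d :: nat and q0 :: "mstate \<Rightarrow> real"
  assumes q0_nonneg: "q0 x \<ge> 0"
    and q0_supp: "x \<notin> clean_states S d \<Longrightarrow> q0 x = 0"
begin

definition marginal :: "mstate \<Rightarrow> real" where
  "marginal y = (\<Sum>x\<in>clean_states S d. if masking_of y x then q0 x else 0)"

lemma marginal_nonneg: "marginal y \<ge> 0"
  unfolding marginal_def by (intro sum_nonneg) (simp add: q0_nonneg)

lemma marginal_update_Some_le: "j \<in> masked y \<Longrightarrow> marginal (y[j := Some a]) \<le> marginal y"
  unfolding marginal_def by (intro sum_mono) (simp add: masking_of_update_Some q0_nonneg)

lemma sum_marginal_update_Some:
  assumes "y \<in> states S d" "j \<in> masked y"
  shows "(\<Sum>a\<in>{1..S}. marginal (y[j := Some a])) = marginal y"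
  unfolding marginal_def
  by (subst sum.swap) (rule sum.cong[OF refl], erule sum_masking_of_update_Some[OF _ assms])

lemma fwd_law_eq:
  assumes y: "y \<in> states S d"
  shows "fwd_law S d q0 u y
       = exp (- u) ^ (d - card (masked y)) * (1 - exp (- u)) ^ card (masked y) * marginal y"
proof -
  let ?P = "exp (- u) ^ (d - card (masked y)) * (1 - exp (- u)) ^ card (masked y)"
  have "fwd_law S d q0 u y = (\<Sum>x\<in>clean_states S d. q0 x * ctmc_trans (states S d) (mask_rate S d) u x y)"
    unfolding fwd_law_def
    by (rule sum.mono_neutral_right) (auto simp: finite_states clean_states_subset q0_supp)
  also have "\<dots> = (\<Sum>x\<in>clean_states S d. ?P * (if masking_of y x then q0 x else 0))"
    by (rule sum.cong[OF refl]) (simp add: ctmc_trans_mask_rate[OF _ y])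
  also have "\<dots> = ?P * marginal y"
    unfolding marginal_def by (simp add: sum_distrib_left)
  finally show ?thesis .
qed

lemma marginal_neq_0_if_fwd_law_pos:
  "y \<in> states S d \<Longrightarrow> fwd_law S d q0 u y > 0 \<Longrightarrow> marginal y \<noteq> 0"
  by (auto simp: fwd_law_eq)

lemma score_update_Some:
  assumes x: "x \<in> states S d" and j: "j \<in> masked x" and a: "a \<in> {1..S}" and u: "u > 0"
  shows "score S d q0 u (x[j := Some a]) x
       = exp (- u) / (1 - exp (- u)) * (marginal (x[j := Some a]) / marginal x)"
proof -
  define E where "E = exp (- u)"
  have E: "0 < E" "E < 1" unfolding E_def using u by auto
  define k where "k = card (masked x)"
  have "1 \<le> k" "k \<le> d"
    unfolding k_def using j finite_masked card_masked_le[OF x] by (auto simp: Suc_le_eq card_gt_0_iff)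
  then have "d - (k - 1) = Suc (d - k)" "k = Suc (k - 1)" by auto
  moreover have "card (masked (x[j := Some a])) = k - 1"
    unfolding k_def by (rule card_masked_update_Some[OF j])
  ultimately have unmasked: "fwd_law S d q0 u (x[j := Some a])
      = E ^ (d - k) * (1 - E) ^ (k - 1) * E * marginal (x[j := Some a])"
    using fwd_law_eq[OF update_Some_states[OF x a]] unfolding E_def by simp
  have masked: "fwd_law S d q0 u x = E ^ (d - k) * (1 - E) ^ (k - 1) * (1 - E) * marginal x"
    using fwd_law_eq[OF x] power_minus_mult[of k "1 - E"] \<open>1 \<le> k\<close> unfolding E_def k_def by simp
  have "E ^ (d - k) * (1 - E) ^ (k - 1) > 0"
    using E by simp
  then show ?thesis
    unfolding score_def E_def[symmetric] unmasked masked
    using E by (cases "marginal x = 0") (simp_all add: field_simps)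
qed

end

section \<open>A solution of the backward equation of the reverse process\<close>

definition test_weight :: "real \<Rightarrow> real \<Rightarrow> real \<Rightarrow> real" where
  "test_weight T t r = exp (t - T) / (1 - exp (r - T))"

lemma test_weight_has_derivative:
  assumes "\<tau> < T"
  shows "(test_weight T t has_real_derivative
           exp (\<tau> - T) / (1 - exp (\<tau> - T)) * test_weight T t \<tau>) (at \<tau> within W)"
proof -
  have "exp (\<tau> - T) < 1" using assms by simp
  then have "(test_weight T t has_real_derivative
      exp (\<tau> - T) / (1 - exp (\<tau> - T)) * test_weight T t \<tau>) (at \<tau>)"
    unfolding test_weight_def[abs_def]
    by (auto intro!: derivative_eq_intros simp: power2_eq_square field_simps)
  then show ?thesis
    by (rule has_field_derivative_at_within)
qed

context masking_process
begin

lemma sum_rev_rate: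
  assumes x: "x \<in> states S d"
  shows "(\<Sum>y\<in>states S d. rev_rate S d q0 T \<tau> x y * h y)
       = (\<Sum>j\<in>masked x. \<Sum>a\<in>{1..S}.
            score S d q0 (T - \<tau>) (x[j := Some a]) x * (h (x[j := Some a]) - h x))"
proof -
  let ?X = "states S d - {x}" and ?R = "rev_rate_off S d q0 T \<tau> x"
  have "(\<Sum>y\<in>states S d. rev_rate S d q0 T \<tau> x y * h y)
      = rev_rate S d q0 T \<tau> x x * h x + (\<Sum>y\<in>?X. rev_rate S d q0 T \<tau> x y * h y)"
    using x by (simp add: sum.remove[OF finite_states])
  also have "(\<Sum>y\<in>?X. rev_rate S d q0 T \<tau> x y * h y) = (\<Sum>y\<in>?X. ?R y * h y)"
    by (rule sum.cong[OF refl]) (auto simp: rev_rate_def)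
  also have "rev_rate S d q0 T \<tau> x x * h x + (\<Sum>y\<in>?X. ?R y * h y) = (\<Sum>y\<in>?X. ?R y * (h y - h x))"
    unfolding rev_rate_def by (simp add: sum_distrib_right sum_subtractf right_diff_distrib)
  also have "\<dots> = (\<Sum>y\<in>?X. mask_rate_off y x * (score S d q0 (T - \<tau>) y x * (h y - h x)))"
    by (rule sum.cong[OF refl]) (auto simp: rev_rate_off_def mask_rate_def)
  also have "\<dots> = (\<Sum>j\<in>masked x. \<Sum>a\<in>{1..S}.
      score S d q0 (T - \<tau>) (x[j := Some a]) x * (h (x[j := Some a]) - h x))"
    by (rule sum_mask_rate_off_into[OF x])
  finally show ?thesis .
qed

lemma sum_rev_rate_eq_0_if_marginal_0:
  assumes x: "x \<in> states S d" and "marginal x = 0" "\<tau> < T"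
  shows "(\<Sum>y\<in>states S d. rev_rate S d q0 T \<tau> x y * h y) = 0"
  unfolding sum_rev_rate[OF x] using assms by (simp add: score_update_Some)

lemma sum_rev_rate_eq_0_if_unmasked:
  assumes x: "x \<in> states S d" and "i \<notin> masked x" and "\<And>y. i \<notin> masked y \<Longrightarrow> h y = 0"
  shows "(\<Sum>y\<in>states S d. rev_rate S d q0 T \<tau> x y * h y) = 0"
  unfolding sum_rev_rate[OF x] using assms by (simp add: masked_update_Some)

definition unmask_ratio :: "nat \<Rightarrow> nat \<Rightarrow> mstate \<Rightarrow> real" where
  "unmask_ratio i c x = marginal (x[i := Some c]) / marginal x"

text \<open>On states of zero marginal, which the reverse process
  never enters, any constant \<open>A\<close> solves the backward equation; taking for \<open>A\<close> the score at \<open>xl\<close>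
  makes the value at time \<open>t\<close> the integrand of the theorem.\<close>

definition test_fun ::
  "real \<Rightarrow> real \<Rightarrow> nat \<Rightarrow> nat \<Rightarrow> mstate \<Rightarrow> real \<Rightarrow> real \<Rightarrow> mstate \<Rightarrow> real" where
  "test_fun T t i c xl A r x =
     (if i \<notin> masked x then 0
      else if marginal x = 0 then A
      else test_weight T t r * (unmask_ratio i c xl - unmask_ratio i c x))"

lemma sum_unmask_test_fun_same_coord:
  fixes t A :: real and c :: nat and xl :: mstate
  assumes x: "x \<in> states S d" and i: "i \<in> masked x" and "marginal x \<noteq> 0" and "\<tau> < T"
  defines "\<phi> \<equiv> test_fun T t i c xl A \<tau>"
  shows "(\<Sum>a\<in>{1..S}. score S d q0 (T - \<tau>) (x[i := Some a]) x * (\<phi> (x[i := Some a]) - \<phi> x))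
       = - (exp (\<tau> - T) / (1 - exp (\<tau> - T))) * \<phi> x"
proof -
  define K where "K = exp (\<tau> - T) / (1 - exp (\<tau> - T))"
  have "score S d q0 (T - \<tau>) (x[i := Some a]) x * (\<phi> (x[i := Some a]) - \<phi> x)
      = - K * \<phi> x / marginal x * marginal (x[i := Some a])" if "a \<in> {1..S}" for a
    using score_update_Some[OF x i that, of "T - \<tau>"] \<open>\<tau> < T\<close>
    unfolding \<phi>_def K_def by (simp add: test_fun_def masked_update_Some)
  then have "(\<Sum>a\<in>{1..S}. score S d q0 (T - \<tau>) (x[i := Some a]) x * (\<phi> (x[i := Some a]) - \<phi> x))
      = - K * \<phi> x / marginal x * (\<Sum>a\<in>{1..S}. marginal (x[i := Some a]))"
    by (simp add: sum_distrib_left)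
  also have "\<dots> = - K * \<phi> x"
    using \<open>marginal x \<noteq> 0\<close> sum_marginal_update_Some[OF x i] by simp
  finally show ?thesis
    unfolding K_def .
qed

lemma sum_unmask_test_fun_other_coord:
  fixes t A :: real and xl :: mstate
  assumes x: "x \<in> states S d" and i: "i \<in> masked x" and "marginal x \<noteq> 0" and "\<tau> < T"
    and c: "c \<in> {1..S}" and j: "j \<in> masked x" "j \<noteq> i"
  defines "\<phi> \<equiv> test_fun T t i c xl A \<tau>"
  shows "(\<Sum>a\<in>{1..S}. score S d q0 (T - \<tau>) (x[j := Some a]) x * (\<phi> (x[j := Some a]) - \<phi> x)) = 0"
proof -
  define K where "K = exp (\<tau> - T) / (1 - exp (\<tau> - T))"
  define g where "g = test_weight T t \<tau>"
  let ?m = marginal and ?\<pi> = "unmask_ratio i c"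
  have \<phi>x: "\<phi> x = g * (?\<pi> xl - ?\<pi> x)"
    unfolding \<phi>_def g_def test_fun_def using i \<open>?m x \<noteq> 0\<close> by simp
  have flux: "?m (x[j := Some a]) * (\<phi> (x[j := Some a]) - \<phi> x)
      = g * (?m (x[j := Some a]) * ?\<pi> x - ?m ((x[i := Some c])[j := Some a]))" for a
  proof -
    have swap: "(x[i := Some c])[j := Some a] = (x[j := Some a])[i := Some c]"
      using j(2) by (simp add: list_update_swap)
    have ij: "i \<in> masked (x[j := Some a])"
      using i j(2) by (simp add: masked_update_Some)
    show ?thesis
    proof (cases "?m (x[j := Some a]) = 0")
      case True
      then have "?m ((x[j := Some a])[i := Some c]) = 0"
        using marginal_update_Some_le[OF ij, of c] marginal_nonneg[of "(x[j := Some a])[i := Some c]"]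
        by simp
      with True swap show ?thesis by simp
    next
      case False
      then show ?thesis
        unfolding \<phi>x unfolding \<phi>_def g_def test_fun_def unmask_ratio_def
        using ij swap by (simp add: algebra_simps)
    qed
  qed
  have "score S d q0 (T - \<tau>) (x[j := Some a]) x * (\<phi> (x[j := Some a]) - \<phi> x)
      = K / ?m x * g * (?m (x[j := Some a]) * ?\<pi> x - ?m ((x[i := Some c])[j := Some a]))"
    if "a \<in> {1..S}" for a
    using score_update_Some[OF x j(1) that, of "T - \<tau>"] \<open>\<tau> < T\<close> flux[of a]
    unfolding K_def by (simp add: mult.assoc)
  then have "(\<Sum>a\<in>{1..S}. score S d q0 (T - \<tau>) (x[j := Some a]) x * (\<phi> (x[j := Some a]) - \<phi> x))
      = (\<Sum>a\<in>{1..S}. K / ?m x * g * (?m (x[j := Some a]) * ?\<pi> x - ?m ((x[i := Some c])[j := Some a])))"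
    by (rule sum.cong[OF refl])
  also have "\<dots> = K / ?m x * g * ((\<Sum>a\<in>{1..S}. ?m (x[j := Some a])) * ?\<pi> x
                        - (\<Sum>a\<in>{1..S}. ?m ((x[i := Some c])[j := Some a])))"
    by (simp only: sum_distrib_right sum_subtractf[symmetric] sum_distrib_left)
  also have "\<dots> = K / ?m x * g * (?m x * ?\<pi> x - ?m (x[i := Some c]))"
    using j i sum_marginal_update_Some[OF x j(1)]
      sum_marginal_update_Some[OF update_Some_states[OF x c], of j]
    by (simp add: masked_update_Some)
  also have "\<dots> = 0"
    using \<open>?m x \<noteq> 0\<close> by (simp add: unmask_ratio_def)
  finally show ?thesis .
qed

lemma sum_rev_rate_test_fun:
  assumes x: "x \<in> states S d" and i: "i \<in> masked x" and "marginal x \<noteq> 0" and "\<tau> < T"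
    and c: "c \<in> {1..S}"
  shows "(\<Sum>y\<in>states S d. rev_rate S d q0 T \<tau> x y * test_fun T t i c xl A \<tau> y)
       = - (exp (\<tau> - T) / (1 - exp (\<tau> - T))) * test_fun T t i c xl A \<tau> x"
proof -
  let ?\<phi> = "test_fun T t i c xl A \<tau>"
  let ?flux = "\<lambda>j. \<Sum>a\<in>{1..S}.
    score S d q0 (T - \<tau>) (x[j := Some a]) x * (?\<phi> (x[j := Some a]) - ?\<phi> x)"
  have "(\<Sum>y\<in>states S d. rev_rate S d q0 T \<tau> x y * ?\<phi> y)
      = ?flux i + (\<Sum>j\<in>masked x - {i}. ?flux j)"
    unfolding sum_rev_rate[OF x] using i by (simp add: sum.remove finite_masked)
  also have "(\<Sum>j\<in>masked x - {i}. ?flux j) = 0"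
    using sum_unmask_test_fun_other_coord[OF x i \<open>marginal x \<noteq> 0\<close> \<open>\<tau> < T\<close> c] by simp
  finally show ?thesis
    using sum_unmask_test_fun_same_coord[OF x i \<open>marginal x \<noteq> 0\<close> \<open>\<tau> < T\<close>] by simp
qed

lemma test_fun_backward:
  assumes x: "x \<in> states S d" and "\<tau> < T" and c: "c \<in> {1..S}"
  shows "((\<lambda>r. test_fun T t i c xl A r x) has_real_derivative
           - (\<Sum>y\<in>states S d. rev_rate S d q0 T \<tau> x y * test_fun T t i c xl A \<tau> y)) (at \<tau> within W)"
proof (cases "i \<in> masked x \<and> marginal x \<noteq> 0")
  case True
  then have i: "i \<in> masked x" and m: "marginal x \<noteq> 0" by auto
  have "- (\<Sum>y\<in>states S d. rev_rate S d q0 T \<tau> x y * test_fun T t i c xl A \<tau> y)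
      = exp (\<tau> - T) / (1 - exp (\<tau> - T)) * test_weight T t \<tau> * (unmask_ratio i c xl - unmask_ratio i c x)"
    unfolding sum_rev_rate_test_fun[OF x i m \<open>\<tau> < T\<close> c] using i m by (simp add: test_fun_def)
  moreover have "(\<lambda>r. test_fun T t i c xl A r x)
      = (\<lambda>r. test_weight T t r * (unmask_ratio i c xl - unmask_ratio i c x))"
    using True by (simp add: test_fun_def)
  ultimately show ?thesis
    using DERIV_cmult_right[OF test_weight_has_derivative[OF \<open>\<tau> < T\<close>]] by simp
next
  case False
  then have "(\<Sum>y\<in>states S d. rev_rate S d q0 T \<tau> x y * test_fun T t i c xl A \<tau> y) = 0"
    using sum_rev_rate_eq_0_if_unmasked[OF x] sum_rev_rate_eq_0_if_marginal_0[OF x _ \<open>\<tau> < T\<close>]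
    by (auto simp: test_fun_def)
  moreover have "(\<lambda>r. test_fun T t i c xl A r x) = (\<lambda>r. if i \<in> masked x then A else 0)"
    using False by (auto simp: test_fun_def)
  ultimately show ?thesis
    by simp
qed

lemma test_fun_final:
  assumes x: "x \<in> states S d" and xl: "xl \<in> states S d" and i: "i \<in> masked xl"
    and c: "c \<in> {1..S}" and "t < T"
  defines "A \<equiv> score S d q0 (T - t) (xl[i := Some c]) xl"
  shows "test_fun T t i c xl A t x
       = (A - score S d q0 (T - t) (x[i := Some c]) x) * (if i \<in> masked x then 1 else 0)"
proof -
  have "score S d q0 (T - t) (y[i := Some c]) y = test_weight T t t * unmask_ratio i c y"
    if "y \<in> states S d" "i \<in> masked y" for y
    using score_update_Some[OF that c, of "T - t"] \<open>t < T\<close>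
    by (simp add: test_weight_def unmask_ratio_def)
  then show ?thesis
    using x xl i unfolding A_def test_fun_def
    by (auto simp: unmask_ratio_def algebra_simps)
qed

end

theorem mainTheorem19:
  fixes S d :: nat and q0 :: "mstate \<Rightarrow> real" and T l t :: real
    and xl :: mstate and i c :: nat and p :: "real \<Rightarrow> mstate \<Rightarrow> real"
  assumes q0_nonneg: "\<forall>x. q0 x \<ge> 0"
    and q0_supp: "\<forall>x. x \<notin> clean_states S d \<longrightarrow> q0 x = 0"
    and q0_sum: "(\<Sum>x\<in>clean_states S d. q0 x) = 1"
    and T_pos: "T > 0"
    and times: "0 \<le> l" "l < t" "t < T"
    and xl_state: "xl \<in> states S d"
    and xl_pos: "fwd_law S d q0 (T - l) xl > 0"
    and i_masked: "i \<in> masked xl"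
    and c_range: "c \<in> {1..S}"
    and p_law: "rev_cond_law S d q0 T l xl t p"
  shows "(\<Sum>x\<in>states S d. p t x *
            ((score S d q0 (T - t) (xl[i := Some c]) xl - score S d q0 (T - t) (x[i := Some c]) x)
             * (if i \<in> masked x then 1 else 0))) = 0"
proof -
  interpret masking_process S d q0
    using q0_nonneg q0_supp by unfold_locales auto
  define A where "A = score S d q0 (T - t) (xl[i := Some c]) xl"
  let ?\<phi> = "test_fun T t i c xl A"
  have p_init: "\<forall>y\<in>states S d. p l y = (if y = xl then 1 else 0)"
    and p_forward: "\<forall>\<tau>\<in>{l..t}. \<forall>y\<in>states S d. ((\<lambda>r. p r y) has_real_derivative
        (\<Sum>x\<in>states S d. p \<tau> x * rev_rate S d q0 T \<tau> x y)) (at \<tau> within {l..t})"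
    using p_law unfolding rev_cond_law_def by auto
  have "(\<Sum>x\<in>states S d. p t x * ?\<phi> t x) = (\<Sum>x\<in>states S d. p l x * ?\<phi> l x)"
    using times p_forward test_fun_backward[OF _ _ c_range]
    by (intro forward_backward_pairing_const[OF finite_states]) auto
  also have "\<dots> = (\<Sum>x\<in>states S d. if x = xl then ?\<phi> l x else 0)"
    by (rule sum.cong[OF refl]) (simp add: p_init)
  also have "\<dots> = ?\<phi> l xl"
    using xl_state by (simp add: finite_states)
  also have "\<dots> = 0"
    using i_masked marginal_neq_0_if_fwd_law_pos[OF xl_state xl_pos] by (simp add: test_fun_def)
  finally show ?thesis
    using test_fun_final[OF _ xl_state i_masked c_range \<open>t < T\<close>] unfolding A_def by simp
qed

end
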